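(* For every integer $n\ge 1$, \[ \mathrm{Od}(n!)=(-1)^{D(n)+\nu(\lfloor n/4\rfloor)}. \]
   Context: For $n\ge 1$ write $n=2^{v}o$ with $o$ odd; $\mathrm{Od}(n):=1$ if $o\equiv 1\pmod 4$ and $\mathrm{Od}(n):=-1$ if $o\equiv 3\pmod 4$. If $n$ has binary expansion $n=\sum_{i\ge0}b_i2^i$ ($b_i\in\{0,1\}$), then $\nu(n):=\sum_i b_i$ (with $\nu(0)=0$), and $D(n)$ is the number of indices $i$ with $b_ib_{i+1}=1$ (the number of, possibly overlapping, pairs of adjacent $1$s). *)

theory Defs
  imports Main "HOL-Computational_Algebra.Primes"
begin

definition odd_part :: "nat \<Rightarrow> nat" where
  "odd_part n = n div 2 ^ multiplicity (2::nat) n"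

definition Od :: "nat \<Rightarrow> int" where
  "Od n = (if odd_part n mod 4 = 1 then 1 else -1)"

definition bit_at :: "nat \<Rightarrow> nat \<Rightarrow> nat" where
  "bit_at n i = n div 2 ^ i mod 2"

text \<open>Binary digit sum (all digits at positions >= n vanish since n < 2^n).\<close>
definition nu :: "nat \<Rightarrow> nat" where
  "nu n = (\<Sum>i<n. bit_at n i)"

definition D :: "nat \<Rightarrow> nat" where
  "D n = card {i. bit_at n i = 1 \<and> bit_at n (Suc i) = 1}"

end

theory Submission
  imports Defs
begin

text \<open>Od is multiplicative, with Od (2m) = Od m and Od (2m+1) = (-1)^m. Splitting (2m)!
  into its even factors 2, 4, ..., 2m and its odd factors gives
  Od ((2m)!) = (-1)^(m div 2) Od (m!), and hence a recursion for Od (n!) along n \<mapsto> n div 2.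
  The right-hand side obeys the same recursion: deleting the last binary digit of n
  destroys a pair of adjacent ones exactly when n \<equiv> 3 (mod 4), and deletes the last
  digit n div 4 mod 2 of n div 4.\<close>

lemma odd_part_power2_mult:
  assumes "odd (q::nat)"
  shows "odd_part (2 ^ k * q) = q"
proof -
  have "multiplicity (2::nat) (2 ^ k * q) = multiplicity (2::nat) (2 ^ k) + multiplicity 2 q"
    by (rule prime_elem_multiplicity_mult_distrib) (use odd_pos[OF assms] in auto)
  also have "\<dots> = k"
    using assms by (simp add: not_dvd_imp_multiplicity_0)
  finally show ?thesis
    unfolding odd_part_def by simp
qed

lemma Od_power2_mult:
  "odd (q::nat) \<Longrightarrow> Od (2 ^ k * q) = (if q mod 4 = 1 then 1 else -1)"
  by (simp add: Od_def odd_part_power2_mult)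

lemma Od_Suc_0 [simp]: "Od (Suc 0) = 1"
  using Od_power2_mult[of 1 0] by simp

lemma power2_mult_odd_decomp:
  assumes "(n::nat) > 0"
  obtains k q where "odd q" "n = 2 ^ k * q"
proof -
  obtain q where "n = 2 ^ multiplicity 2 n * q" "\<not> (2::nat) dvd q"
    by (rule multiplicity_decompose'[where p = 2 and x = n]) (use assms in auto)
  then show ?thesis
    using that by blast
qed

lemma Od_mult:
  assumes "a > 0" "b > 0"
  shows "Od (a * b) = Od a * Od b"
proof -
  obtain i q where q: "odd q" "a = 2 ^ i * q"
    using power2_mult_odd_decomp assms(1) by blast
  obtain j r where r: "odd r" "b = 2 ^ j * r"
    using power2_mult_odd_decomp assms(2) by blast
  have "a * b = 2 ^ (i + j) * (q * r)"
    using q r by (simp add: power_add)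
  then have "Od (a * b) = (if (q * r) mod 4 = 1 then 1 else -1)"
    using q(1) r(1) by (simp add: Od_power2_mult)
  moreover have "(q * r) mod 4 = 1 \<longleftrightarrow> (q mod 4 = 1 \<longleftrightarrow> r mod 4 = 1)"
  proof -
    have "q mod 4 = 1 \<or> q mod 4 = 3" "r mod 4 = 1 \<or> r mod 4 = 3"
      using q(1) r(1) by presburger+
    moreover have "(q * r) mod 4 = (q mod 4) * (r mod 4) mod 4"
      by (simp add: mod_mult_eq)
    ultimately show ?thesis
      by (elim disjE) simp_all
  qed
  ultimately show ?thesis
    using q r by (simp add: Od_power2_mult)
qed

lemma Od_double: "m > 0 \<Longrightarrow> Od (2 * m) = Od m"
  using Od_mult[of 2 m] Od_power2_mult[of 1 1] by simp

lemma Od_odd: "Od (Suc (2 * m)) = (-1) ^ m"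
proof -
  have "Suc (2 * m) mod 4 = 1 \<longleftrightarrow> even m"
    by presburger
  then show ?thesis
    using Od_power2_mult[of "Suc (2 * m)" 0] by (simp add: minus_one_power_iff)
qed

lemma Od_fact_Suc: "Od (fact (Suc n)) = Od (Suc n) * Od (fact n)"
proof -
  have "fact (Suc n) = Suc n * fact n"
    by (simp only: fact_Suc of_nat_id)
  then show ?thesis
    by (simp only: Od_mult fact_gt_zero zero_less_Suc)
qed

lemma Od_fact_double: "Od (fact (2 * m)) = (-1) ^ (m div 2) * Od (fact m)"
proof (induction m)
  case 0
  show ?case by simp
next
  case (Suc m)
  have "Od (fact (2 * Suc m)) = Od (Suc (Suc (2 * m))) * (Od (Suc (2 * m)) * Od (fact (2 * m)))"
    by (simp only: mult_Suc_right add_2_eq_Suc Od_fact_Suc)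
  also have "\<dots> = (-1) ^ (m div 2 + m) * (Od (Suc m) * Od (fact m))"
    using Od_double[of "Suc m"] by (simp add: Od_odd Suc.IH power_add)
  also have "\<dots> = (-1) ^ (Suc m div 2) * Od (fact (Suc m))"
    by (simp add: Od_fact_Suc minus_one_power_iff del: fact_Suc) presburger
  finally show ?case .
qed

lemma Od_fact_div2:
  "Od (fact n) = (-1) ^ (n div 4 + (if odd n then n div 2 else 0)) * Od (fact (n div 2))"
proof (cases "even n")
  case True
  then have "n = 2 * (n div 2)" by simp
  then show ?thesis
    using True Od_fact_double[of "n div 2"] by (simp add: div_mult2_eq[symmetric])
next
  case False
  define m where "m = n div 2"
  have "n = Suc (2 * m)"
    using False by (simp add: m_def)
  then have "Od (fact n) = (-1) ^ m * ((-1) ^ (m div 2) * Od (fact m))"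
    by (simp only: Od_fact_Suc Od_odd Od_fact_double)
  moreover have "n div 4 = m div 2"
    by (simp add: m_def div_mult2_eq)
  ultimately show ?thesis
    using False by (simp add: m_def power_add)
qed

lemma bit_at_0: "bit_at n 0 = n mod 2"
  by (simp add: bit_at_def)

lemma bit_at_Suc: "bit_at n (Suc i) = bit_at (n div 2) i"
  by (simp add: bit_at_def div_mult2_eq)

lemma bit_at_ge: "n \<le> i \<Longrightarrow> bit_at n i = 0"
  using less_le_trans[OF less_exp[of n] power_increasing[of n i "2::nat"]]
  by (simp add: bit_at_def)

lemma nu_eq_sum: "n \<le> N \<Longrightarrow> nu n = (\<Sum>i<N. bit_at n i)"
  unfolding nu_def by (rule sum.mono_neutral_left) (auto simp: bit_at_ge)

lemma nu_div2: "nu n = n mod 2 + nu (n div 2)"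
proof -
  have "nu n = (\<Sum>i<Suc n. bit_at n i)"
    by (rule nu_eq_sum) simp
  also have "\<dots> = bit_at n 0 + (\<Sum>i<n. bit_at (n div 2) i)"
    by (simp only: sum.lessThan_Suc_shift bit_at_Suc)
  also have "(\<Sum>i<n. bit_at (n div 2) i) = nu (n div 2)"
    by (rule nu_eq_sum[symmetric]) simp
  finally show ?thesis
    by (simp add: bit_at_0)
qed

lemma Collect_nat_eq_Suc_image:
  "{i::nat. P i} = (if P 0 then {0} else {}) \<union> Suc ` {i. P (Suc i)}"
  by (auto simp: image_iff) (metis not0_implies_Suc)+

lemma card_Collect_nat_Suc:
  assumes "finite {i. P (Suc i)}"
  shows "card {i::nat. P i} = (if P 0 then 1 else 0) + card {i. P (Suc i)}"
  using assms by (subst Collect_nat_eq_Suc_image) (simp add: card_image)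

lemma D_div2: "D n = (if odd n \<and> odd (n div 2) then 1 else 0) + D (n div 2)"
proof -
  have "{i. bit_at (n div 2) i = 1 \<and> bit_at (n div 2) (Suc i) = 1} \<subseteq> {..<n div 2}"
    by (auto simp: bit_at_ge intro: ccontr)
  then have "finite {i. bit_at n (Suc i) = 1 \<and> bit_at n (Suc (Suc i)) = 1}"
    by (simp add: bit_at_Suc finite_subset)
  then show ?thesis
    unfolding D_def by (simp add: card_Collect_nat_Suc bit_at_0 bit_at_Suc odd_iff_mod_2_eq_one)
qed

lemma Od_fact_binary: "Od (fact n) = (-1) ^ (D n + nu (n div 4))"
proof (induction n rule: less_induct)
  case (less n)
  show ?case
  proof (cases "n = 0")
    case True
    then show ?thesis
      by (simp add: D_def nu_def bit_at_def)
  next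
    case False
    define m where "m = n div 2"
    have IH: "Od (fact m) = (-1) ^ (D m + nu (m div 4))"
      using less False by (simp add: m_def)
    have "n div 4 div 2 = m div 4"
      by (simp add: m_def div_mult2_eq[symmetric])
    then have "nu (n div 4) = n div 4 mod 2 + nu (m div 4)"
      using nu_div2[of "n div 4"] by simp
    moreover have "n div 4 = m div 2"
      by (simp add: m_def div_mult2_eq)
    ultimately show ?thesis
      using Od_fact_div2[of n] D_div2[of n] IH
      by (simp add: m_def[symmetric] power_add minus_one_power_iff)
  qed
qed

theorem lemma3p1:
  fixes n :: nat
  assumes "n \<ge> 1"
  shows "Od (fact n) = (-1) ^ (D n + nu (n div 4))"
  by (rule Od_fact_binary)

end
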